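(* Let $1\le m\le k\le 6$, let $\theta\in(\pi/2,\pi)$ be sufficiently close to $\pi/2$ and $\kappa>0$. For each integer $l\in\{0,1,\dots,k+m\}$ there is a constant $c>0$ independent of $\tau$ and $z$ such that for all $\tau>0$ and $z\in\Gamma^\tau_{\theta,\kappa}$: $$\left|\delta_{\tau,k}^m(e^{-z\tau})\frac{\gamma_l(e^{-z\tau})}{l!}\tau^{l+1}-\frac{z^m}{z^{l+1}}\right|\le\begin{cases} c\,\tau^{l+1}|z|^m+c\,\tau^k|z|^{k+m-l-1}, & l=0\text{ or } l \text{ odd},\\ c\,\tau^{l+2}|z|^{m+1}+c\,\tau^k|z|^{k+m-l-1}, & l\ge 2 \text{ even}.\end{cases}$$
   Context: For $1\le k\le 6$ and $\tau>0$, $\delta_{\tau,k}(\xi)=\frac1\tau\sum_{j=1}^k\frac1j(1-\xi)^j$ (the BDF$k$ generating function). For real $p\ge0$, $\gamma_p(\xi)=\sum_{n=1}^\infty n^p\xi^n$ (analytically continued; for integer $p$ it is rational with only pole at $\xi=1$). For $\theta\in(\pi/2,\pi)$ and $\kappa>0$, $\Gamma_{\theta,\kappa}=\{z\in\mathbb C:|z|=\kappa,|\arg z|\le\theta\}\cup\{z=re^{\pm i\theta}:r\ge\kappa\}$, and $\Gamma^\tau_{\theta,\kappa}=\{z\in\Gamma_{\theta,\kappa}:|\operatorname{Im}z|\le\pi/\tau\}$. *)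

theory Defs
  imports "HOL-Analysis.Analysis"
begin

definition bdf_delta :: "real \<Rightarrow> nat \<Rightarrow> complex \<Rightarrow> complex" where
  "bdf_delta \<tau> k \<xi> = (1 / complex_of_real \<tau>) * (\<Sum>j=1..k. (1 / of_nat j) * (1 - \<xi>) ^ j)"

text \<open>gamma_p(xi) = sum_{n>=1} n^p xi^n for integer p, analytically continued to C - {1}:
  gamma_0(xi) = xi/(1-xi) (the sum of the geometric series), and
  gamma_{p+1}(xi) = xi * gamma_p'(xi) (termwise differentiation of the series).\<close>
fun gamma_int :: "nat \<Rightarrow> complex \<Rightarrow> complex" where
  "gamma_int 0 = (\<lambda>\<xi>. \<xi> / (1 - \<xi>))"
| "gamma_int (Suc p) = (\<lambda>\<xi>. \<xi> * deriv (gamma_int p) \<xi>)"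

definition Gamma_contour :: "real \<Rightarrow> real \<Rightarrow> complex set" where
  "Gamma_contour \<theta> \<kappa> =
     {z. cmod z = \<kappa> \<and> \<bar>Arg z\<bar> \<le> \<theta>} \<union>
     {z. \<exists>r\<ge>\<kappa>. z = complex_of_real r * cis \<theta> \<or> z = complex_of_real r * cis (- \<theta>)}"

definition Gamma_contour_tau :: "real \<Rightarrow> real \<Rightarrow> real \<Rightarrow> complex set" where
  "Gamma_contour_tau \<tau> \<theta> \<kappa> = {z \<in> Gamma_contour \<theta> \<kappa>. \<bar>Im z\<bar> \<le> pi / \<tau>}"

end

theory Submission
  imports Defs "HOL-Complex_Analysis.Complex_Analysis"
begin

text \<open>
  Put \<open>w = z \<tau>\<close>. Since \<open>\<tau> \<delta>\<^sub>\<tau>\<^sub>,\<^sub>k(e^(-z \<tau>)) = D\<^sub>k(w) = \<Sum>\<^sub>j\<^sub>=\<^sub>1\<^sub>.\<^sub>.\<^sub>k (1 - e^(-w))^j / j\<close>, the quantity to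
  be estimated is \<open>\<tau>^(l + 1 - m) |E(w)|\<close> with \<open>E(w) = D\<^sub>k(w)^m \<gamma>\<^sub>l(e^(-w)) / l! - w^(m - l - 1)\<close>,
  and the contour is mapped into the half-strip \<open>|Im w| \<le> \<pi>, Re w \<ge> \<pi> cot \<theta>\<close> minus the origin.
  So it suffices to show \<open>|E(w)| \<le> c |w|^(m + \<epsilon>) + c |w|^(k + m - l - 1)\<close> there, where \<open>\<epsilon> = 1\<close>
  for even \<open>l \<ge> 2\<close> and \<open>\<epsilon> = 0\<close> otherwise.

  Away from the origin, \<open>D\<^sub>k(w)^m \<gamma>\<^sub>l(e^(-w))\<close> is a continuous function of \<open>e^(-w)\<close>, which ranges
  over a compact set avoiding \<open>1\<close>; so \<open>E(w) = O(|w|^m)\<close>. Near the origin, \<open>D\<^sub>k(w)\<close> is a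
  truncation of the series of \<open>-log (1 - (1 - e^(-w))) = w\<close>, hence \<open>D\<^sub>k(w) = w + O(|w|^(k + 1))\<close>,
  and \<open>\<gamma>\<^sub>l(e^(-w)) = (-d/dw)^l (1 / (e^w - 1)) = l! / w^(l + 1) + (-1)^l f\<^sup>(\<^sup>l\<^sup>)(w) - [l = 0] / 2\<close>,
  where \<open>f(w) = 1 / (e^w - 1) - 1 / w + 1 / 2\<close> is holomorphic and odd near \<open>0\<close>. Its even
  derivatives vanish at \<open>0\<close>, which yields the extra factor \<open>|w|\<close> for even \<open>l \<ge> 2\<close>.

  The estimate holds for every \<open>\<theta> \<in> (\<pi>/2, \<pi>)\<close>.
\<close>

section \<open>Holomorphy of the remainder of the \<open>coth\<close> expansion\<close>

lemma exp_neq_1_in_strip: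
  assumes "w \<noteq> 0" "\<bar>Im w\<bar> < 2 * pi"
  shows "exp w \<noteq> 1"
proof
  assume "exp w = 1"
  then obtain n :: int where n: "Re w = 0" "Im w = of_int (2 * n) * pi"
    by (auto simp: exp_eq_1)
  with assms(2) have "\<bar>real_of_int n\<bar> < 1"
    by (simp add: abs_mult)
  then have "n = 0" by linarith
  with n assms(1) show False
    by (simp add: complex_eq_iff)
qed

lemma abs_Im_lt_2pi_in_unit_ball: "w \<in> ball 0 1 \<Longrightarrow> \<bar>Im w\<bar> < 2 * pi"
  using abs_Im_le_cmod[of w] pi_gt3 by simp

definition exp_quot :: "complex \<Rightarrow> complex" where
  "exp_quot w = (if w = 0 then 1 else (exp w - 1) / w)"

lemma exp_quot_holomorphic: "exp_quot holomorphic_on UNIV"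
proof -
  have "deriv (\<lambda>w. exp w - 1) 0 = 1"
    by (rule DERIV_imp_deriv) (auto intro!: derivative_eq_intros)
  then have "exp_quot = (\<lambda>w. if w = 0 then deriv (\<lambda>w. exp w - 1) 0
                                else ((exp w - 1) - (exp 0 - 1)) / (w - 0))"
    by (auto simp: exp_quot_def)
  moreover have "(\<lambda>w. if w = 0 then deriv (\<lambda>w. exp w - 1) 0
                      else ((exp w - 1) - (exp 0 - 1)) / (w - 0)) holomorphic_on UNIV"
    by (intro pole_lemma_open holomorphic_intros) auto
  ultimately show ?thesis by simp
qed

lemma exp_quot_0 [simp]: "exp_quot 0 = 1"
  by (simp add: exp_quot_def)

lemma exp_quot_nonzero: "\<bar>Im w\<bar> < 2 * pi \<Longrightarrow> exp_quot w \<noteq> 0"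
  using exp_neq_1_in_strip[of w] by (auto simp: exp_quot_def)

text \<open>\<open>coth_remainder w = 1 / (e^w - 1) - 1 / w + 1 / 2 = coth (w / 2) / 2 - 1 / w\<close>,
  continued holomorphically across \<open>w = 0\<close>.\<close>
definition coth_remainder :: "complex \<Rightarrow> complex" where
  "coth_remainder w =
     (if w = 0 then deriv (\<lambda>v. 1 / exp_quot v) 0 else (1 / exp_quot w - 1) / w) + 1 / 2"

lemma coth_remainder_holomorphic: "coth_remainder holomorphic_on ball 0 1"
proof -
  have "(\<lambda>v. 1 / exp_quot v) holomorphic_on ball 0 1"
    using exp_quot_nonzero abs_Im_lt_2pi_in_unit_ball
    by (intro holomorphic_intros holomorphic_on_subset[OF exp_quot_holomorphic]) auto
  from pole_lemma_open[OF this, of 0]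
  have "(\<lambda>w. if w = 0 then deriv (\<lambda>v. 1 / exp_quot v) 0
             else (1 / exp_quot w - 1) / w) holomorphic_on ball 0 1"
    unfolding exp_quot_0 diff_zero div_by_1 by simp
  then show ?thesis
    unfolding coth_remainder_def[abs_def] by (intro holomorphic_intros)
qed

lemma coth_remainder_eq:
  assumes "w \<noteq> 0" "\<bar>Im w\<bar> < 2 * pi"
  shows "coth_remainder w = 1 / (exp w - 1) - 1 / w + 1 / 2"
  using assms exp_neq_1_in_strip[OF assms]
  by (simp add: coth_remainder_def exp_quot_def field_simps)

lemma coth_remainder_odd:
  assumes "w \<in> ball 0 1"
  shows "coth_remainder (- w) = - coth_remainder w"
proof (rule analytic_continuation_open[of "ball 0 1 - {0}" "ball 0 1"
      "\<lambda>w. coth_remainder (- w)" "\<lambda>w. - coth_remainder w"])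
  show "(\<lambda>w. coth_remainder (- w)) holomorphic_on ball 0 1"
    by (rule holomorphic_on_compose_gen[OF _ coth_remainder_holomorphic, unfolded o_def])
       (auto intro!: holomorphic_intros)
  show "(\<lambda>w. - coth_remainder w) holomorphic_on ball 0 1"
    by (intro holomorphic_intros coth_remainder_holomorphic)
  have "1 / 2 \<in> ball (0 :: complex) 1 - {0}"
    by simp
  then show "ball 0 1 - {0 :: complex} \<noteq> {}"
    by blast
  fix v :: complex
  assume v: "v \<in> ball 0 1 - {0}"
  then have Im_v: "\<bar>Im v\<bar> < 2 * pi"
    using abs_Im_lt_2pi_in_unit_ball by blast
  then have "exp v \<noteq> 1"
    using v exp_neq_1_in_strip by blast
  then have "1 / (inverse (exp v) - 1) = - 1 - 1 / (exp v - 1)"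
    by (simp add: field_simps)
  then show "coth_remainder (- v) = - coth_remainder v"
    using v Im_v coth_remainder_eq[of v] coth_remainder_eq[of "- v"]
    by (simp add: exp_minus)
qed (use assms in \<open>auto intro: convex_connected\<close>)

lemma higher_deriv_coth_remainder_even:
  assumes "even n"
  shows "(deriv ^^ n) coth_remainder 0 = 0"
proof -
  have "(-1) ^ n * (deriv ^^ n) coth_remainder (-1 * 0)
          = (deriv ^^ n) (\<lambda>w. coth_remainder (-1 * w)) 0"
    by (rule higher_deriv_compose_linear[OF coth_remainder_holomorphic, where S = "ball 0 1", symmetric])
       auto
  also have "\<dots> = (deriv ^^ n) (\<lambda>w. - coth_remainder w) 0"
    using coth_remainder_odd
    by (intro higher_deriv_transform_within_open[of _ "ball 0 1"] holomorphic_intros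
          holomorphic_on_compose_gen[OF _ coth_remainder_holomorphic, unfolded o_def]) auto
  also have "\<dots> = - (deriv ^^ n) coth_remainder 0"
    by (rule higher_deriv_uminus[OF coth_remainder_holomorphic]) auto
  finally show ?thesis
    using assms by simp
qed

section \<open>Laurent expansion of \<open>\<gamma>\<^sub>l(e^(-w))\<close> at the origin\<close>

lemma gamma_int_holomorphic: "gamma_int l holomorphic_on - {1}"
proof (induction l)
  case 0
  show ?case by (auto intro!: holomorphic_intros)
next
  case (Suc l)
  then have "deriv (gamma_int l) holomorphic_on - {1}"
    by (intro holomorphic_deriv) auto
  then show ?case by (auto intro!: holomorphic_intros)
qed

definition gamma_exp :: "nat \<Rightarrow> complex \<Rightarrow> complex" where
  "gamma_exp l w = gamma_int l (exp (- w))"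

lemma gamma_exp_has_field_derivative:
  assumes "exp (- w) \<noteq> 1"
  shows "(gamma_exp l has_field_derivative - gamma_exp (Suc l) w) (at w)"
proof -
  have "(gamma_int l has_field_derivative deriv (gamma_int l) (exp (- w))) (at (exp (- w)))"
    using gamma_int_holomorphic assms by (intro holomorphic_derivI[of _ "- {1}"]) auto
  moreover have "((\<lambda>w. exp (- w)) has_field_derivative - exp (- w)) (at w)"
    by (auto intro!: derivative_eq_intros)
  ultimately show ?thesis
    unfolding gamma_exp_def by (auto dest: DERIV_chain2 simp: mult.commute)
qed

lemma gamma_exp_0: "gamma_exp 0 w = 1 / (exp w - 1)"
  by (simp add: gamma_exp_def exp_minus field_simps)

lemma has_field_derivative_divide_power:
  fixes c w :: "'a::real_normed_field"
  assumes "w \<noteq> 0"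
  shows "((\<lambda>v. c / v ^ n) has_field_derivative - (of_nat n * c / w ^ Suc n)) (at w)"
proof -
  have "((\<lambda>v. c / v ^ n) has_field_derivative
          (0 * w ^ n - c * (of_nat n * (1 * w ^ (n - Suc 0)))) / (w ^ n * w ^ n)) (at w)"
    using assms by (intro DERIV_divide DERIV_const DERIV_power DERIV_ident) auto
  moreover have "(0 * w ^ n - c * (of_nat n * (1 * w ^ (n - Suc 0)))) / (w ^ n * w ^ n)
                  = - (of_nat n * c / w ^ Suc n)"
    using assms by (cases n) (simp_all add: field_simps)
  ultimately show ?thesis
    by (rule DERIV_cong)
qed

lemma gamma_exp_laurent:
  assumes "w \<in> ball 0 1 - {0}"
  shows "gamma_exp l w = fact l / w ^ (l + 1) + (-1) ^ l * (deriv ^^ l) coth_remainder w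
                          - (if l = 0 then 1 / 2 else 0)"
  using assms
proof (induction l arbitrary: w)
  case 0
  then have "w \<noteq> 0" "\<bar>Im w\<bar> < 2 * pi"
    using abs_Im_lt_2pi_in_unit_ball by auto
  then show ?case
    by (simp add: gamma_exp_0 coth_remainder_eq)
next
  case (Suc l)
  have "(deriv ^^ l) coth_remainder holomorphic_on ball 0 1"
    by (intro holomorphic_higher_deriv coth_remainder_holomorphic) auto
  then have "((deriv ^^ l) coth_remainder has_field_derivative (deriv ^^ Suc l) coth_remainder w) (at w)"
    using Suc.prems by (auto intro: holomorphic_derivI)
  then have "((\<lambda>v. fact l / v ^ (l + 1) + (-1) ^ l * (deriv ^^ l) coth_remainder v
                   - (if l = 0 then 1 / 2 else 0)) has_field_derivative
              - (of_nat (l + 1) * fact l / w ^ Suc (l + 1))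
                + (-1) ^ l * (deriv ^^ Suc l) coth_remainder w - 0) (at w)"
    using Suc.prems by (intro DERIV_diff DERIV_add DERIV_cmult DERIV_const has_field_derivative_divide_power) auto
  then have "((\<lambda>v. fact l / v ^ (l + 1) + (-1) ^ l * (deriv ^^ l) coth_remainder v
                   - (if l = 0 then 1 / 2 else 0)) has_field_derivative
              - (fact (Suc l) / w ^ (Suc l + 1) + (-1) ^ Suc l * (deriv ^^ Suc l) coth_remainder w)) (at w)"
    by (rule DERIV_cong) (simp add: fact_Suc)
  then have "(gamma_exp l has_field_derivative
              - (fact (Suc l) / w ^ (Suc l + 1) + (-1) ^ Suc l * (deriv ^^ Suc l) coth_remainder w)) (at w)"
    by (rule has_field_derivative_transform_within_open[of _ _ _ "ball 0 1 - {0}"])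
       (use Suc.prems in \<open>auto simp: Suc.IH\<close>)
  moreover have "exp (- w) \<noteq> 1"
    using Suc.prems exp_neq_1_in_strip[of "- w"] abs_Im_lt_2pi_in_unit_ball[of w] by auto
  then have "(gamma_exp l has_field_derivative - gamma_exp (Suc l) w) (at w)"
    by (rule gamma_exp_has_field_derivative)
  ultimately have "- gamma_exp (Suc l) w
      = - (fact (Suc l) / w ^ (Suc l + 1) + (-1) ^ Suc l * (deriv ^^ Suc l) coth_remainder w)"
    by (rule DERIV_unique[rotated])
  then show ?case
    by (simp only: neg_equal_iff_equal) simp
qed

lemma holomorphic_vanishing_at_0_bound:
  assumes "f holomorphic_on S" "open S" "cball 0 r \<subseteq> S" "f 0 = 0"
  shows "\<exists>M. \<forall>w\<in>cball 0 r. cmod (f w) \<le> M * cmod w"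
proof -
  have "deriv f holomorphic_on cball 0 r"
    using assms by (intro holomorphic_on_subset[OF holomorphic_deriv]) auto
  then obtain M where M: "\<And>w. w \<in> cball 0 r \<Longrightarrow> cmod (deriv f w) \<le> M"
    using continuous_on_compact_bound[OF compact_cball holomorphic_on_imp_continuous_on] by blast
  have "cmod (f w - f 0) \<le> M * cmod (w - 0)" if "w \<in> cball 0 r" for w
  proof (rule field_differentiable_bound[OF convex_cball _ M that])
    fix v :: complex
    assume "v \<in> cball 0 r"
    with assms(3) show "(f has_field_derivative deriv f v) (at v within cball 0 r)"
      by (intro holomorphic_derivI[OF assms(1,2)]) blast
  qed (use that in \<open>auto intro: order_trans[OF norm_ge_zero]\<close>)
  with assms(4) show ?thesis
    by (intro exI[of _ M]) simp
qed

lemma norm_divide_fact_le: "cmod (z / fact l) \<le> cmod z"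
proof -
  have "cmod z / fact l \<le> cmod z / 1"
    by (intro divide_left_mono) auto
  then show ?thesis
    by (simp add: norm_divide)
qed

definition parity_gain :: "nat \<Rightarrow> nat" where
  "parity_gain l = (if l = 0 \<or> odd l then 0 else 1)"

lemma gamma_exp_principal_part_bound:
  "\<exists>C. \<forall>w. w \<noteq> 0 \<and> cmod w \<le> 1 / 2 \<longrightarrow>
     cmod (gamma_exp l w / fact l - 1 / w ^ (l + 1)) \<le> C * cmod w ^ parity_gain l"
proof -
  define h where "h = (deriv ^^ l) coth_remainder"
  have h: "h holomorphic_on ball 0 1"
    unfolding h_def by (intro holomorphic_higher_deriv coth_remainder_holomorphic) auto
  have cball_sub: "cball 0 (1 / 2) \<subseteq> ball (0 :: complex) 1"
    by auto
  have principal_part: "cmod (gamma_exp l w / fact l - 1 / w ^ (l + 1))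
                          \<le> cmod ((-1) ^ l * h w - (if l = 0 then 1 / 2 else 0))"
    if "w \<noteq> 0" "cmod w \<le> 1 / 2" for w
    using that gamma_exp_laurent[of w l] norm_divide_fact_le
    by (simp add: h_def add_divide_distrib diff_divide_distrib)
  show ?thesis
  proof (cases "l = 0 \<or> odd l")
    case True
    obtain M where M: "\<And>w. w \<in> cball 0 (1 / 2) \<Longrightarrow> cmod (h w) \<le> M"
      using continuous_on_compact_bound[OF compact_cball
              holomorphic_on_imp_continuous_on[OF holomorphic_on_subset[OF h cball_sub]]] by blast
    have "cmod ((-1) ^ l * h w - (if l = 0 then 1 / 2 else 0)) \<le> M + 1" if "cmod w \<le> 1 / 2" for w
      using M[of w] that norm_triangle_ineq4[of "(-1) ^ l * h w" "if l = 0 then 1 / 2 else 0"]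
      by (auto simp: norm_mult norm_power)
    with True principal_part show ?thesis
      by (intro exI[of _ "M + 1"]) (auto simp: parity_gain_def intro: order_trans)
  next
    case False
    then have "h 0 = 0"
      using higher_deriv_coth_remainder_even by (simp add: h_def)
    then obtain M where M: "\<And>w. w \<in> cball 0 (1 / 2) \<Longrightarrow> cmod (h w) \<le> M * cmod w"
      using holomorphic_vanishing_at_0_bound[OF h open_ball cball_sub] by blast
    with False principal_part show ?thesis
      by (intro exI[of _ M]) (auto simp: parity_gain_def norm_mult norm_power intro: order_trans)
  qed
qed

section \<open>Consistency of the BDF symbol\<close>

lemma norm_ln_one_minus_plus_partial_sum:
  fixes u :: complex
  assumes "cmod u \<le> 1 / 2"
  shows "cmod (ln (1 - u) + (\<Sum>j=1..k. (1 / of_nat j) * u ^ j)) \<le> 2 * cmod u ^ (k + 1)"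
proof -
  define f where "f n = u ^ n / of_nat n" for n
  have "(\<lambda>n. - ((- (- u)) ^ n) / of_nat n) sums ln (1 + - u)"
    by (rule Ln_series') (use assms in simp)
  then have "(\<lambda>n. - f n) sums ln (1 - u)"
    by (simp add: f_def)
  then have "f sums - ln (1 - u)"
    using sums_minus by fastforce
  then have tail: "(\<lambda>i. f (i + (k + 1))) sums (- ln (1 - u) - (\<Sum>i<k + 1. f i))"
    by (rule sums_split_initial_segment)
  have "(\<Sum>i<k + 1. f i) = (\<Sum>i=0..k. f i)"
    by (simp add: atLeast0AtMost lessThan_Suc_atMost)
  also have "\<dots> = (\<Sum>j=1..k. (1 / of_nat j) * u ^ j)"
    \<comment> \<open>the term \<open>f 0 = 1 / 0\<close> is \<open>0\<close>\<close>
    by (subst sum_shift_lb_Suc0_0[symmetric]) (simp_all add: f_def)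
  finally have tail_sum: "ln (1 - u) + (\<Sum>j=1..k. (1 / of_nat j) * u ^ j) = - (\<Sum>i. f (i + (k + 1)))"
    using tail by (simp add: sums_iff)
  have geometric: "(\<lambda>i. cmod u ^ (k + 1) * cmod u ^ i) sums (cmod u ^ (k + 1) * (1 / (1 - cmod u)))"
    by (intro sums_mult geometric_sums) (use assms in simp)
  have "cmod (\<Sum>i. f (i + (k + 1))) \<le> (\<Sum>i. cmod u ^ (k + 1) * cmod u ^ i)"
  proof (rule norm_suminf_le)
    fix i
    have "cmod (f (i + (k + 1))) = cmod u ^ (i + (k + 1)) / real (i + (k + 1))"
      by (simp only: f_def norm_divide norm_power norm_of_nat)
    also have "\<dots> \<le> cmod u ^ (i + (k + 1)) / 1"
      by (intro divide_left_mono) auto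
    finally show "cmod (f (i + (k + 1))) \<le> cmod u ^ (k + 1) * cmod u ^ i"
      by (simp add: power_add ac_simps)
  qed (use geometric in \<open>simp add: sums_iff\<close>)
  also have "\<dots> = cmod u ^ (k + 1) * (1 / (1 - cmod u))"
    using geometric by (simp add: sums_iff)
  also have "\<dots> \<le> cmod u ^ (k + 1) * 2"
    using assms by (intro mult_left_mono) (auto simp: field_simps)
  finally show ?thesis
    unfolding tail_sum by (simp add: mult.commute)
qed

definition bdf_symbol :: "nat \<Rightarrow> complex \<Rightarrow> complex" where
  "bdf_symbol k w = (\<Sum>j=1..k. (1 / of_nat j) * (1 - exp (- w)) ^ j)"

lemma bdf_symbol_consistency:
  assumes "cmod w \<le> 1 / 4"
  shows "cmod (bdf_symbol k w - w) \<le> 2 ^ (k + 2) * cmod w ^ (k + 1)"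
proof -
  define u where "u = 1 - exp (- w)"
  have "cmod u \<le> 3 / 2 * cmod w"
    using norm_exp_bounds(2)[of "- w"] assms by (simp add: u_def norm_minus_commute)
  then have u_le: "cmod u \<le> 2 * cmod w" and u_small: "cmod u \<le> 1 / 2"
    using assms norm_ge_zero[of w] by linarith+
  have "\<bar>Im w\<bar> \<le> 1 / 4"
    using abs_Im_le_cmod[of w] assms by linarith
  then have "ln (1 - u) = - w"
    using pi_gt3 by (simp add: u_def)
  then have "cmod (bdf_symbol k w - w) = cmod (ln (1 - u) + (\<Sum>j=1..k. (1 / of_nat j) * u ^ j))"
    by (simp add: bdf_symbol_def u_def)
  also have "\<dots> \<le> 2 * cmod u ^ (k + 1)"
    by (rule norm_ln_one_minus_plus_partial_sum[OF u_small])
  also have "\<dots> \<le> 2 * (2 * cmod w) ^ (k + 1)"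
    by (intro mult_left_mono power_mono u_le) auto
  also have "\<dots> = 2 ^ (k + 2) * cmod w ^ (k + 1)"
    by (simp add: power_mult_distrib)
  finally show ?thesis .
qed

lemma norm_bdf_symbol_le:
  assumes "cmod w \<le> 1 / 4"
  shows "cmod (bdf_symbol k w) \<le> (1 + 2 ^ (k + 2)) * cmod w"
proof -
  have "cmod w ^ (k + 1) \<le> cmod w ^ 1"
    using assms by (intro power_decreasing) auto
  then have "2 ^ (k + 2) * cmod w ^ (k + 1) \<le> 2 ^ (k + 2) * cmod w"
    by (intro mult_left_mono) simp_all
  then show ?thesis
    using bdf_symbol_consistency[OF assms, of k] norm_triangle_ineq2[of "bdf_symbol k w" w]
    unfolding distrib_right by linarith
qed

lemma norm_power_diff_le:
  fixes a b :: "'a::real_normed_algebra_1"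
  assumes "norm a \<le> M" "norm b \<le> M"
  shows "norm (a ^ Suc n - b ^ Suc n) \<le> of_nat (Suc n) * M ^ n * norm (a - b)"
proof (induction n)
  case 0
  then show ?case by simp
next
  case (Suc n)
  have M: "0 \<le> M"
    using assms(1) norm_ge_zero order_trans by blast
  have "a ^ Suc (Suc n) - b ^ Suc (Suc n) = a * (a ^ Suc n - b ^ Suc n) + (a - b) * b ^ Suc n"
    by (simp add: algebra_simps)
  then have "norm (a ^ Suc (Suc n) - b ^ Suc (Suc n))
               \<le> norm (a * (a ^ Suc n - b ^ Suc n)) + norm ((a - b) * b ^ Suc n)"
    by (simp only: norm_triangle_ineq)
  also have "\<dots> \<le> norm a * norm (a ^ Suc n - b ^ Suc n) + norm (a - b) * norm (b ^ Suc n)"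
    by (intro add_mono norm_mult_ineq)
  also have "\<dots> \<le> M * (of_nat (Suc n) * M ^ n * norm (a - b)) + norm (a - b) * M ^ Suc n"
    using norm_power_ineq[of b "Suc n"] power_mono[OF assms(2) norm_ge_zero, of "Suc n"]
    by (intro add_mono mult_mono Suc assms mult_left_mono) (auto simp: M)
  also have "\<dots> = of_nat (Suc (Suc n)) * M ^ Suc n * norm (a - b)"
    by (simp add: algebra_simps)
  finally show ?case .
qed

lemma norm_bdf_symbol_power_diff:
  assumes "cmod w \<le> 1 / 4"
  shows "cmod (bdf_symbol k w ^ Suc n - w ^ Suc n)
           \<le> of_nat (Suc n) * (1 + 2 ^ (k + 2)) ^ n * 2 ^ (k + 2) * cmod w ^ (Suc n + k)"
proof -
  define L :: real where "L = 1 + 2 ^ (k + 2)"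
  have "cmod w \<le> L * cmod w"
    by (simp add: L_def distrib_right)
  then have "cmod (bdf_symbol k w ^ Suc n - w ^ Suc n)
               \<le> of_nat (Suc n) * (L * cmod w) ^ n * cmod (bdf_symbol k w - w)"
    using norm_power_diff_le norm_bdf_symbol_le[OF assms] unfolding L_def by blast
  also have "\<dots> \<le> of_nat (Suc n) * (L * cmod w) ^ n * (2 ^ (k + 2) * cmod w ^ (k + 1))"
    by (intro mult_left_mono bdf_symbol_consistency assms) (simp add: L_def)
  also have "\<dots> = of_nat (Suc n) * L ^ n * 2 ^ (k + 2) * cmod w ^ (Suc n + k)"
    by (simp add: power_mult_distrib power_add)
  finally show ?thesis
    unfolding L_def .
qed

section \<open>The scaled error on a half-strip\<close>

lemma power_divide_eq_power_int:
  fixes x :: "'a::field"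
  assumes "x \<noteq> 0"
  shows "x ^ a / x ^ b = x powi (int a - int b)"
  using assms by (simp add: power_int_diff)

lemma norm_divide_power_le_power_int:
  fixes x y :: "'a::real_normed_field"
  assumes "x \<noteq> 0" "norm y \<le> B * norm x ^ a"
  shows "norm (y / x ^ b) \<le> B * norm x powi (int a - int b)"
proof -
  have "norm (y / x ^ b) \<le> B * norm x ^ a / norm x ^ b"
    unfolding norm_divide norm_power using assms(2) by (rule divide_right_mono) simp
  also have "\<dots> = B * norm x powi (int a - int b)"
    using assms(1) by (simp only: times_divide_eq_right[symmetric] power_divide_eq_power_int norm_eq_zero
                         not_False_eq_True)
  finally show ?thesis .
qed

definition bdf_gamma_error :: "nat \<Rightarrow> nat \<Rightarrow> nat \<Rightarrow> complex \<Rightarrow> complex" where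
  "bdf_gamma_error k m l w = bdf_symbol k w ^ m * (gamma_exp l w / fact l) - w ^ m / w ^ (l + 1)"

lemma bdf_gamma_error_near_0:
  assumes "1 \<le> m"
  shows "\<exists>A B. \<forall>w. w \<noteq> 0 \<and> cmod w \<le> 1 / 4 \<longrightarrow>
           cmod (bdf_gamma_error k m l w)
             \<le> A * cmod w ^ (m + parity_gain l) + B * cmod w powi (int k + int m - int l - 1)"
proof -
  obtain CR where CR: "\<And>w. w \<noteq> 0 \<Longrightarrow> cmod w \<le> 1 / 2 \<Longrightarrow>
      cmod (gamma_exp l w / fact l - 1 / w ^ (l + 1)) \<le> CR * cmod w ^ parity_gain l"
    using gamma_exp_principal_part_bound by blast
  obtain n where m: "m = Suc n"
    using assms by (cases m) auto
  define L :: real where "L = 1 + 2 ^ (k + 2)"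
  define B where "B = of_nat m * L ^ n * 2 ^ (k + 2)"
  have "cmod (bdf_gamma_error k m l w)
          \<le> L ^ m * CR * cmod w ^ (m + parity_gain l) + B * cmod w powi (int k + int m - int l - 1)"
    if w: "w \<noteq> 0" "cmod w \<le> 1 / 4" for w
  proof -
    define D where "D = bdf_symbol k w"
    define R where "R = gamma_exp l w / fact l - 1 / w ^ (l + 1)"
    have "cmod (D ^ m - w ^ m) \<le> B * cmod w ^ (m + k)"
      using norm_bdf_symbol_power_diff[OF w(2), of k n] by (simp add: D_def B_def L_def m)
    from norm_divide_power_le_power_int[OF w(1) this, of "l + 1"]
    have first: "cmod ((D ^ m - w ^ m) / w ^ (l + 1)) \<le> B * cmod w powi (int k + int m - int l - 1)"
      by (simp add: algebra_simps)
    have "cmod (D ^ m * R) = cmod D ^ m * cmod R"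
      by (simp add: norm_mult norm_power)
    also have "\<dots> \<le> (L * cmod w) ^ m * (CR * cmod w ^ parity_gain l)"
      using norm_bdf_symbol_le[OF w(2)] CR[OF w(1)] w(2)
      by (intro mult_mono power_mono) (simp_all add: D_def R_def L_def)
    also have "\<dots> = L ^ m * CR * cmod w ^ (m + parity_gain l)"
      by (simp add: power_mult_distrib power_add)
    finally have second: "cmod (D ^ m * R) \<le> L ^ m * CR * cmod w ^ (m + parity_gain l)" .
    have "bdf_gamma_error k m l w = D ^ m * R + (D ^ m - w ^ m) / w ^ (l + 1)"
      by (simp add: bdf_gamma_error_def D_def R_def diff_divide_distrib right_diff_distrib)
    then have "cmod (bdf_gamma_error k m l w)
                 \<le> cmod (D ^ m * R) + cmod ((D ^ m - w ^ m) / w ^ (l + 1))"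
      by (simp only: norm_triangle_ineq)
    with first second show ?thesis
      by linarith
  qed
  then show ?thesis
    by blast
qed

lemma compact_truncated_strip:
  "compact {w. \<bar>Im w\<bar> \<le> pi \<and> a \<le> Re w \<and> Re w \<le> b \<and> r \<le> cmod w}" (is "compact ?S")
proof -
  have "closed ?S"
    by (intro closed_Collect_conj closed_Collect_le continuous_intros)
  moreover have "?S \<subseteq> cball 0 (\<bar>a\<bar> + \<bar>b\<bar> + pi)"
  proof
    fix w
    assume "w \<in> ?S"
    then have "\<bar>Im w\<bar> \<le> pi" "\<bar>Re w\<bar> \<le> \<bar>a\<bar> + \<bar>b\<bar>"
      by auto
    then show "w \<in> cball 0 (\<bar>a\<bar> + \<bar>b\<bar> + pi)"
      using cmod_le[of w] by simp
  qed
  ultimately show ?thesis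
    using bounded_cball bounded_subset compact_eq_bounded_closed by blast
qed

lemma continuous_on_exp_strip_bound:
  fixes H :: "complex \<Rightarrow> complex"
  assumes "continuous_on (- {1}) H" "0 < r"
  shows "\<exists>B. \<forall>w. \<bar>Im w\<bar> \<le> pi \<and> a \<le> Re w \<and> r \<le> cmod w \<longrightarrow> cmod (H (exp (- w))) \<le> B"
proof -
  define S where "S = {w. \<bar>Im w\<bar> \<le> pi \<and> a \<le> Re w \<and> Re w \<le> 1 \<and> r \<le> cmod w}"
  have "compact S"
    unfolding S_def by (rule compact_truncated_strip)
  define K where "K = (\<lambda>w. exp (- w)) ` S \<union> cball 0 (exp (- 1))"
  have "compact K"
    unfolding K_def
    by (intro compact_Un compact_continuous_image continuous_intros \<open>compact S\<close> compact_cball)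
  have "exp (- w) \<noteq> 1" if "w \<in> S" for w
  proof (rule exp_neq_1_in_strip)
    show "- w \<noteq> 0"
      using that assms(2) by (auto simp: S_def)
    have "\<bar>Im w\<bar> \<le> pi"
      using that by (simp add: S_def)
    then show "\<bar>Im (- w)\<bar> < 2 * pi"
      using pi_gt_zero by (simp only: uminus_complex.sel abs_minus_cancel)
  qed
  then have "K \<subseteq> - {1}"
    by (auto simp: K_def)
  then obtain B where B: "\<And>\<xi>. \<xi> \<in> K \<Longrightarrow> cmod (H \<xi>) \<le> B"
    using continuous_on_compact_bound[OF \<open>compact K\<close> continuous_on_subset[OF assms(1)]] by blast
  have "exp (- w) \<in> K" if "\<bar>Im w\<bar> \<le> pi" "a \<le> Re w" "r \<le> cmod w" for w
  proof (cases "Re w \<le> 1")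
    case True
    with that show ?thesis
      by (simp add: K_def S_def)
  next
    case False
    then show ?thesis
      by (simp add: K_def)
  qed
  with B show ?thesis
    by blast
qed

lemma norm_power_quotient_le:
  assumes "1 / 4 \<le> cmod w"
  shows "cmod (w ^ m / w ^ n) \<le> 4 ^ (n + p) * cmod w ^ (m + p)"
proof -
  have "w \<noteq> 0"
    using assms by auto
  have "cmod w ^ m * 1 \<le> cmod w ^ m * (4 * cmod w) ^ (n + p)"
    using assms by (intro mult_left_mono one_le_power) simp_all
  then have "cmod (w ^ m / w ^ n) \<le> cmod w ^ m * (4 * cmod w) ^ (n + p) / cmod w ^ n"
    unfolding norm_divide norm_power by (intro divide_right_mono) simp_all
  also have "\<dots> = 4 ^ (n + p) * cmod w ^ (m + p)"
    using \<open>w \<noteq> 0\<close> by (simp add: power_mult_distrib power_add)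
  finally show ?thesis .
qed

lemma bdf_gamma_error_far_from_0:
  "\<exists>C. \<forall>w. \<bar>Im w\<bar> \<le> pi \<and> a \<le> Re w \<and> 1 / 4 \<le> cmod w \<longrightarrow>
         cmod (bdf_gamma_error k m l w) \<le> C * cmod w ^ (m + parity_gain l)"
proof -
  have "continuous_on (- {1})
          (\<lambda>\<xi>. (\<Sum>j=1..k. (1 / of_nat j) * (1 - \<xi>) ^ j) ^ m * (gamma_int l \<xi> / fact l))"
    by (intro holomorphic_on_imp_continuous_on holomorphic_intros gamma_int_holomorphic) simp
  then have "\<exists>B. \<forall>w. \<bar>Im w\<bar> \<le> pi \<and> a \<le> Re w \<and> 1 / 4 \<le> cmod w \<longrightarrow>
                 cmod (bdf_symbol k w ^ m * (gamma_exp l w / fact l)) \<le> B"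
    unfolding bdf_symbol_def gamma_exp_def by (rule continuous_on_exp_strip_bound) simp
  then obtain B where B: "\<And>w. \<bar>Im w\<bar> \<le> pi \<Longrightarrow> a \<le> Re w \<Longrightarrow> 1 / 4 \<le> cmod w \<Longrightarrow>
                        cmod (bdf_symbol k w ^ m * (gamma_exp l w / fact l)) \<le> B"
    by blast
  define p where "p = parity_gain l"
  define C where "C = \<bar>B\<bar> * 4 ^ (m + p) + 4 ^ (l + 1 + p)"
  have "cmod (bdf_gamma_error k m l w) \<le> C * cmod w ^ (m + p)"
    if w: "\<bar>Im w\<bar> \<le> pi" "a \<le> Re w" "1 / 4 \<le> cmod w" for w
  proof -
    have "\<bar>B\<bar> * 1 \<le> \<bar>B\<bar> * (4 * cmod w) ^ (m + p)"
      using w(3) by (intro mult_left_mono one_le_power) simp_all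
    then have bounded_part: "cmod (bdf_symbol k w ^ m * (gamma_exp l w / fact l))
                               \<le> \<bar>B\<bar> * (4 * cmod w) ^ (m + p)"
      using B[OF w] by linarith
    have quotient_part: "cmod (w ^ m / w ^ (l + 1)) \<le> 4 ^ (l + 1 + p) * cmod w ^ (m + p)"
      by (rule norm_power_quotient_le[OF w(3)])
    have "cmod (bdf_gamma_error k m l w)
            \<le> cmod (bdf_symbol k w ^ m * (gamma_exp l w / fact l)) + cmod (w ^ m / w ^ (l + 1))"
      unfolding bdf_gamma_error_def by (rule norm_triangle_ineq4)
    also have "\<dots> \<le> \<bar>B\<bar> * (4 * cmod w) ^ (m + p) + 4 ^ (l + 1 + p) * cmod w ^ (m + p)"
      using bounded_part quotient_part by (rule add_mono)
    also have "\<dots> = C * cmod w ^ (m + p)"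
      by (simp add: C_def power_mult_distrib algebra_simps)
    finally show ?thesis .
  qed
  then show ?thesis
    unfolding p_def by blast
qed

lemma bdf_gamma_error_strip_bound:
  assumes "1 \<le> m"
  shows "\<exists>c>0. \<forall>w. w \<noteq> 0 \<and> \<bar>Im w\<bar> \<le> pi \<and> a \<le> Re w \<longrightarrow>
           cmod (bdf_gamma_error k m l w)
             \<le> c * cmod w ^ (m + parity_gain l) + c * cmod w powi (int k + int m - int l - 1)"
proof -
  obtain A B where near: "\<And>w. w \<noteq> 0 \<Longrightarrow> cmod w \<le> 1 / 4 \<Longrightarrow>
      cmod (bdf_gamma_error k m l w)
        \<le> A * cmod w ^ (m + parity_gain l) + B * cmod w powi (int k + int m - int l - 1)"
    using bdf_gamma_error_near_0[OF assms] by blast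
  obtain C where far: "\<And>w. \<bar>Im w\<bar> \<le> pi \<Longrightarrow> a \<le> Re w \<Longrightarrow> 1 / 4 \<le> cmod w \<Longrightarrow>
      cmod (bdf_gamma_error k m l w) \<le> C * cmod w ^ (m + parity_gain l)"
    using bdf_gamma_error_far_from_0 by blast
  define c where "c = \<bar>A\<bar> + \<bar>B\<bar> + \<bar>C\<bar> + 1"
  have "cmod (bdf_gamma_error k m l w)
          \<le> c * cmod w ^ (m + parity_gain l) + c * cmod w powi (int k + int m - int l - 1)"
    if w: "w \<noteq> 0" "\<bar>Im w\<bar> \<le> pi" "a \<le> Re w" for w
  proof -
    define X where "X = cmod w ^ (m + parity_gain l)"
    define Y where "Y = cmod w powi (int k + int m - int l - 1)"
    have "0 \<le> X" "0 \<le> Y"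
      by (simp_all add: X_def Y_def)
    then have "A * X \<le> c * X" "B * Y \<le> c * Y" "C * X \<le> c * X" "0 \<le> c * Y"
      by (auto intro!: mult_right_mono simp: c_def)
    moreover have "cmod (bdf_gamma_error k m l w) \<le> A * X + B * Y \<or>
                   cmod (bdf_gamma_error k m l w) \<le> C * X"
      using near[OF w(1)] far[OF w(2,3)] by (force simp: X_def Y_def)
    ultimately show ?thesis
      unfolding X_def[symmetric] Y_def[symmetric] by linarith
  qed
  moreover have "c > 0"
    by (simp add: c_def add_nonneg_pos)
  ultimately show ?thesis
    by blast
qed

section \<open>From the half-strip to the contour\<close>

lemma cos_mult_abs_Im_le_Re_mult_sin:
  assumes "z \<noteq> 0" "\<bar>Arg z\<bar> \<le> \<theta>" "\<theta> \<le> pi"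
  shows "cos \<theta> * \<bar>Im z\<bar> \<le> Re z * sin \<theta>"
proof -
  define \<phi> where "\<phi> = \<bar>Arg z\<bar>"
  have Re_z: "Re z = cmod z * cos \<phi>"
    using cos_Arg[OF assms(1)] assms(1) by (simp add: \<phi>_def)
  have "\<bar>sin (Arg z)\<bar> = sin \<phi>"
    using sin_ge_zero[of "Arg z"] sin_ge_zero[of "- Arg z"] Arg_le_pi[of z] mpi_less_Arg[of z]
    by (cases "Arg z \<ge> 0") (auto simp: \<phi>_def)
  moreover have "Im z = cmod z * sin (Arg z)"
    using sin_Arg[OF assms(1)] assms(1) by simp
  ultimately have Im_z: "\<bar>Im z\<bar> = cmod z * sin \<phi>"
    by (simp add: abs_mult)
  have "0 \<le> sin (\<theta> - \<phi>)"
    using assms by (intro sin_ge_zero) (auto simp: \<phi>_def)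
  then have "0 \<le> cmod z * (sin \<theta> * cos \<phi> - cos \<theta> * sin \<phi>)"
    by (simp add: sin_diff)
  then show ?thesis
    by (simp add: Re_z Im_z algebra_simps)
qed

lemma Gamma_contour_sector:
  assumes "z \<in> Gamma_contour \<theta> \<kappa>" "0 < \<kappa>" "0 \<le> \<theta>" "\<theta> \<le> pi"
  shows "z \<noteq> 0 \<and> cos \<theta> * \<bar>Im z\<bar> \<le> Re z * sin \<theta>"
proof -
  have sin_nonneg: "0 \<le> sin \<theta>"
    using assms by (intro sin_ge_zero) auto
  consider (arc) "cmod z = \<kappa>" "\<bar>Arg z\<bar> \<le> \<theta>"
    | (ray) r where "\<kappa> \<le> r" "z = of_real r * cis \<theta> \<or> z = of_real r * cis (- \<theta>)"
    using assms(1) unfolding Gamma_contour_def by blast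
  then show ?thesis
  proof cases
    case arc
    then have "z \<noteq> 0"
      using assms(2) by auto
    with arc assms(4) show ?thesis
      using cos_mult_abs_Im_le_Re_mult_sin by blast
  next
    case ray
    then have "0 < r"
      using assms(2) by simp
    with ray(2) sin_nonneg show ?thesis
      by (auto simp: abs_mult)
  qed
qed

lemma Gamma_contour_tau_scaled:
  assumes "z \<in> Gamma_contour_tau \<tau> \<theta> \<kappa>" "0 < \<tau>" "0 < \<kappa>" "pi / 2 \<le> \<theta>" "\<theta> < pi"
  shows "z * complex_of_real \<tau> \<noteq> 0 \<and> \<bar>Im (z * complex_of_real \<tau>)\<bar> \<le> pi
           \<and> pi * cot \<theta> \<le> Re (z * complex_of_real \<tau>)"
proof -
  define w where "w = z * complex_of_real \<tau>"
  have z: "z \<in> Gamma_contour \<theta> \<kappa>" and Im_z: "\<bar>Im z\<bar> \<le> pi / \<tau>"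
    using assms(1) by (auto simp: Gamma_contour_tau_def)
  have "0 \<le> \<theta>"
    using assms(4) pi_gt_zero by linarith
  then have "z \<noteq> 0" and sector: "cos \<theta> * \<bar>Im z\<bar> \<le> Re z * sin \<theta>"
    using Gamma_contour_sector[OF z assms(3)] assms(5) by auto
  have sin_pos: "0 < sin \<theta>"
    using assms pi_gt_zero by (intro sin_gt_zero) auto
  have "0 \<le> cos (pi - \<theta>)"
    using assms by (intro cos_ge_zero) auto
  then have cos_nonpos: "cos \<theta> \<le> 0"
    by simp
  have Im_w: "\<bar>Im w\<bar> \<le> pi"
    using Im_z assms(2) by (simp add: w_def abs_mult field_simps)
  have "cos \<theta> * pi \<le> cos \<theta> * \<bar>Im w\<bar>"
    using Im_w cos_nonpos by (rule mult_left_mono_neg)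
  also have "\<dots> \<le> Re w * sin \<theta>"
    using mult_right_mono[OF sector, of \<tau>] assms(2) by (simp add: w_def abs_mult algebra_simps)
  finally have "pi * cot \<theta> \<le> Re w"
    using sin_pos by (simp add: cot_def pos_divide_le_eq mult.commute)
  with Im_w \<open>z \<noteq> 0\<close> assms(2) show ?thesis
    by (simp add: w_def)
qed

lemma bdf_gamma_scaling:
  assumes "0 < \<tau>"
  shows "bdf_delta \<tau> k (exp (- z * complex_of_real \<tau>)) ^ m
           * (gamma_int l (exp (- z * complex_of_real \<tau>)) / of_nat (fact l))
           * complex_of_real \<tau> ^ (l + 1) - z ^ m / z ^ (l + 1)
         = complex_of_real (\<tau> ^ (l + 1) / \<tau> ^ m) * bdf_gamma_error k m l (z * complex_of_real \<tau>)"
proof -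
  define t where "t = complex_of_real \<tau>"
  define D where "D = bdf_symbol k (z * t)"
  define P where "P = gamma_exp l (z * t) / fact l"
  define q where "q = z ^ m / z ^ (l + 1)"
  have "t \<noteq> 0"
    using assms by (simp add: t_def)
  have "bdf_delta \<tau> k (exp (- z * t)) ^ m * (gamma_int l (exp (- z * t)) / of_nat (fact l))
          * t ^ (l + 1) - q = (D / t) ^ m * P * t ^ (l + 1) - q"
    by (simp add: bdf_delta_def bdf_symbol_def gamma_exp_def t_def D_def P_def)
  also have "\<dots> = t ^ (l + 1) / t ^ m * (D ^ m * P - t ^ m / t ^ (l + 1) * q)"
    using \<open>t \<noteq> 0\<close> by (simp add: power_divide field_simps)
  also have "t ^ m / t ^ (l + 1) * q = (z * t) ^ m / (z * t) ^ (l + 1)"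
    by (simp only: q_def power_mult_distrib times_divide_times_eq mult.commute)
  finally show ?thesis
    by (simp add: bdf_gamma_error_def D_def P_def q_def t_def)
qed

lemma rescale_error_bound:
  assumes "0 < \<tau>"
  shows "\<tau> ^ (l + 1) / \<tau> ^ m * (c * cmod (z * complex_of_real \<tau>) ^ (m + p)
            + c * cmod (z * complex_of_real \<tau>) powi (int k + int m - int l - 1))
         = c * \<tau> ^ (l + 1 + p) * cmod z ^ (m + p) + c * \<tau> ^ k * cmod z powi (int k + int m - int l - 1)"
proof -
  define e where "e = int k + int m - int l - 1"
  have tau_gain: "\<tau> ^ (l + 1) / \<tau> ^ m * \<tau> ^ (m + p) = \<tau> ^ (l + 1 + p)"
    using assms by (simp add: power_add field_simps)
  have "\<tau> ^ (l + 1) / \<tau> ^ m = \<tau> powi (int (l + 1) - int m)"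
    using assms by (intro power_divide_eq_power_int) simp
  then have "\<tau> ^ (l + 1) / \<tau> ^ m * \<tau> powi e = \<tau> powi ((int (l + 1) - int m) + e)"
    using assms by (simp add: power_int_add)
  also have "(int (l + 1) - int m) + e = int k"
    by (simp add: e_def)
  finally have tau_powi: "\<tau> ^ (l + 1) / \<tau> ^ m * \<tau> powi e = \<tau> ^ k"
    by simp
  have norm_z\<tau>: "cmod (z * complex_of_real \<tau>) = \<tau> * cmod z"
    using assms by (simp add: norm_mult)
  have "\<tau> ^ (l + 1) / \<tau> ^ m * (c * cmod (z * complex_of_real \<tau>) ^ (m + p)
          + c * cmod (z * complex_of_real \<tau>) powi e)
        = c * (\<tau> ^ (l + 1) / \<tau> ^ m * \<tau> ^ (m + p)) * cmod z ^ (m + p)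
          + c * (\<tau> ^ (l + 1) / \<tau> ^ m * \<tau> powi e) * cmod z powi e"
    unfolding norm_z\<tau> power_mult_distrib power_int_mult_distrib by (simp add: algebra_simps)
  then show ?thesis
    unfolding tau_gain tau_powi e_def[symmetric] .
qed

lemma bdf_gamma_contour_bound:
  assumes "1 \<le> m" "pi / 2 \<le> \<theta>" "\<theta> < pi" "0 < \<kappa>"
  shows "\<exists>c > 0. \<forall>\<tau> > 0. \<forall>z \<in> Gamma_contour_tau \<tau> \<theta> \<kappa>.
           cmod (bdf_delta \<tau> k (exp (- z * complex_of_real \<tau>)) ^ m
                   * (gamma_int l (exp (- z * complex_of_real \<tau>)) / of_nat (fact l))
                   * complex_of_real \<tau> ^ (l + 1)
                 - z ^ m / z ^ (l + 1))
           \<le> (if l = 0 \<or> odd l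
               then c * \<tau> ^ (l + 1) * cmod z ^ m + c * \<tau> ^ k * cmod z powi (int k + int m - int l - 1)
               else c * \<tau> ^ (l + 2) * cmod z ^ (m + 1) + c * \<tau> ^ k * cmod z powi (int k + int m - int l - 1))"
proof -
  define p where "p = parity_gain l"
  define e where "e = int k + int m - int l - 1"
  obtain c where "c > 0" and c: "\<And>w. w \<noteq> 0 \<Longrightarrow> \<bar>Im w\<bar> \<le> pi \<Longrightarrow> pi * cot \<theta> \<le> Re w \<Longrightarrow>
      cmod (bdf_gamma_error k m l w) \<le> c * cmod w ^ (m + p) + c * cmod w powi e"
    using bdf_gamma_error_strip_bound[OF assms(1), of "pi * cot \<theta>" k l] unfolding p_def e_def by blast
  have bound: "cmod (bdf_delta \<tau> k (exp (- z * complex_of_real \<tau>)) ^ m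
                   * (gamma_int l (exp (- z * complex_of_real \<tau>)) / of_nat (fact l))
                   * complex_of_real \<tau> ^ (l + 1)
                 - z ^ m / z ^ (l + 1))
          \<le> c * \<tau> ^ (l + 1 + p) * cmod z ^ (m + p) + c * \<tau> ^ k * cmod z powi e"
    if \<tau>: "0 < \<tau>" and z: "z \<in> Gamma_contour_tau \<tau> \<theta> \<kappa>" for \<tau> z
  proof -
    define w where "w = z * complex_of_real \<tau>"
    have w: "w \<noteq> 0" "\<bar>Im w\<bar> \<le> pi" "pi * cot \<theta> \<le> Re w"
      using Gamma_contour_tau_scaled[OF z \<tau> assms(4,2,3)] by (simp_all add: w_def)
    have scale: "\<tau> ^ (l + 1) / \<tau> ^ m * (c * cmod w ^ (m + p) + c * cmod w powi e)
                   = c * \<tau> ^ (l + 1 + p) * cmod z ^ (m + p) + c * \<tau> ^ k * cmod z powi e"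
      unfolding w_def e_def by (rule rescale_error_bound[OF \<tau>])
    have "cmod (bdf_delta \<tau> k (exp (- z * complex_of_real \<tau>)) ^ m
                   * (gamma_int l (exp (- z * complex_of_real \<tau>)) / of_nat (fact l))
                   * complex_of_real \<tau> ^ (l + 1)
                 - z ^ m / z ^ (l + 1)) = \<tau> ^ (l + 1) / \<tau> ^ m * cmod (bdf_gamma_error k m l w)"
      using \<tau> by (simp only: bdf_gamma_scaling[OF \<tau>] norm_mult norm_of_real w_def) simp
    also have "\<dots> \<le> \<tau> ^ (l + 1) / \<tau> ^ m * (c * cmod w ^ (m + p) + c * cmod w powi e)"
      using \<tau> by (intro mult_left_mono c w) simp
    finally show ?thesis
      unfolding scale .
  qed
  have parity_cases: "(if l = 0 \<or> odd l
                   then c' * \<tau> ^ (l + 1) * cmod z ^ m + c' * \<tau> ^ k * cmod z powi e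
                   else c' * \<tau> ^ (l + 2) * cmod z ^ (m + 1) + c' * \<tau> ^ k * cmod z powi e)
                 = c' * \<tau> ^ (l + 1 + p) * cmod z ^ (m + p) + c' * \<tau> ^ k * cmod z powi e"
    for c' \<tau> :: real and z :: complex
    by (simp add: p_def parity_gain_def)
  show ?thesis
    unfolding e_def[symmetric] parity_cases using \<open>c > 0\<close> bound by blast
qed

theorem lemma3p3:
  fixes m k :: nat
  assumes "1 \<le> m" and "m \<le> k" and "k \<le> 6"
  shows "\<exists>\<theta>\<^sub>0 > pi / 2. \<forall>\<theta> \<kappa> (l::nat).
           pi / 2 < \<theta> \<and> \<theta> < pi \<and> \<theta> \<le> \<theta>\<^sub>0 \<and> \<kappa> > 0 \<and> l \<le> k + m \<longrightarrow>
           (\<exists>c > 0. \<forall>\<tau> > 0. \<forall>z \<in> Gamma_contour_tau \<tau> \<theta> \<kappa>.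
              cmod (bdf_delta \<tau> k (exp (- z * complex_of_real \<tau>)) ^ m
                      * (gamma_int l (exp (- z * complex_of_real \<tau>)) / of_nat (fact l))
                      * complex_of_real \<tau> ^ (l + 1)
                    - z ^ m / z ^ (l + 1))
              \<le> (if l = 0 \<or> odd l
                  then c * \<tau> ^ (l + 1) * cmod z ^ m + c * \<tau> ^ k * cmod z powi (int k + int m - int l - 1)
                  else c * \<tau> ^ (l + 2) * cmod z ^ (m + 1) + c * \<tau> ^ k * cmod z powi (int k + int m - int l - 1)))"
  by (intro exI[of _ pi] conjI allI impI bdf_gamma_contour_bound[OF assms(1)]) auto

end
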